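(* Let $\pi\ge1$. For every input $\sigma=(g_1,\dots,g_T)\in\Sigma$, the outputs $\bar v_t$ of CR-Pursuit($\pi$) satisfy $$\sum_{t=1}^T\frac{g_t(\bar v_t)}{p(t)}\ \le\ \frac{\Delta}{\pi}\,(\ln\theta+1),$$ where $p(t)=g_t'(0)$ and $\theta=M/m$.
   Context: Fix $\Delta>0$ and $0<m\le M$, $\theta=M/m$. Let $\mathcal G$ be the family of all functions $g:[0,\Delta]\to\mathbb{R}$ that are concave, increasing and differentiable on $[0,\Delta]$ with $g(0)=0$ and $g'(0)\in[m,M]$. An input is a finite sequence $\sigma=(g_1,\dots,g_T)$, $T\ge1$, $g_t\in\mathcal G$; $\Sigma$ is the set of all inputs; $\sigma^{[1:t]}=(g_1,\dots,g_t)$ ($\sigma^{[1:0]}$ empty). $\eta_{OPT}(\sigma^{[1:t]})$ is the optimal value of $\max\sum_{s=1}^t g_s(v_s)$ s.t. $\sum_{s=1}^t v_s\le\Delta$, $v_s\ge0$ (and $0$ for the empty sequence). For $\pi\ge1$, CR-Pursuit($\pi$) outputs at time $t$ the smallest $\bar v_t\in[0,\Delta]$ with $g_t(\bar v_t)=\frac1\pi\big[\eta_{OPT}(\sigma^{[1:t]})-\eta_{OPT}(\sigma^{[1:t-1]})\big]$. *)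

theory Defs
  imports "HOL-Analysis.Analysis"
begin

definition in_G :: "real \<Rightarrow> real \<Rightarrow> real \<Rightarrow> (real \<Rightarrow> real) \<Rightarrow> bool" where
  "in_G \<Delta> m M g \<longleftrightarrow>
     concave_on {0..\<Delta>} g \<and> mono_on {0..\<Delta>} g \<and> g differentiable_on {0..\<Delta>} \<and>
     g 0 = 0 \<and>
     (\<exists>d. (g has_real_derivative d) (at 0 within {0..\<Delta>}) \<and> m \<le> d \<and> d \<le> M)"

text \<open>Offline optimum for the prefix g_1..g_t (equals 0 for t = 0).\<close>
definition eta_OPT :: "real \<Rightarrow> (nat \<Rightarrow> real \<Rightarrow> real) \<Rightarrow> nat \<Rightarrow> real" where
  "eta_OPT \<Delta> g t = Sup {(\<Sum>s=1..t. g s (v s)) | v :: nat \<Rightarrow> real.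
       (\<forall>s\<in>{1..t}. 0 \<le> v s) \<and> (\<Sum>s=1..t. v s) \<le> \<Delta>}"

definition cr_pursuit :: "real \<Rightarrow> real \<Rightarrow> (nat \<Rightarrow> real \<Rightarrow> real) \<Rightarrow> nat \<Rightarrow> real" where
  "cr_pursuit \<Delta> \<pi> g t = Inf {v \<in> {0..\<Delta>}.
       g t v = (eta_OPT \<Delta> g t - eta_OPT \<Delta> g (t - 1)) / \<pi>}"

end

theory Submission
  imports Defs
begin

text \<open>
  Write \<open>D t = \<eta>\<^sub>O\<^sub>P\<^sub>T(t) - \<eta>\<^sub>O\<^sub>P\<^sub>T(t - 1)\<close>; CR-Pursuit earns exactly \<open>g\<^sub>t(v\<^sub>t) = D t / \<pi>\<close>.
  The key estimate is a level condition: for every price \<open>y \<ge> 0\<close>, the increments \<open>D t\<close>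
  at times with \<open>p(t) \<le> y\<close> sum to at most \<open>y \<Delta>\<close>. To see it, compare the offline problem
  with the relaxation in which unspent budget is sold at price \<open>y\<close> and only the functions
  with \<open>p(t) > y\<close> are kept: the discarded functions have slope at most \<open>y\<close>, so the
  relaxation dominates, and an exchange argument based on concavity shows that a new
  function raises the relaxation by no more than it raises the offline optimum.

  Since moreover \<open>p(t) \<ge> m\<close>, the level condition bounds \<open>\<Sum> D t / p(t)\<close> by the value
  of the extremal distribution (mass \<open>m \<Delta>\<close> at level \<open>m\<close>, density \<open>\<Delta>\<close> on \<open>[m, M]\<close>),
  which is \<open>\<Delta> (ln (M / m) + 1)\<close>.
\<close>

section \<open>Allocations with a price on the unspent budget\<close>

definition feasible_alloc :: "nat set \<Rightarrow> real \<Rightarrow> (nat \<Rightarrow> real) \<Rightarrow> bool" where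
  "feasible_alloc S \<Delta> v \<longleftrightarrow> (\<forall>s\<in>S. 0 \<le> v s) \<and> (\<Sum>s\<in>S. v s) \<le> \<Delta>"

definition priced_value ::
    "nat set \<Rightarrow> (nat \<Rightarrow> real \<Rightarrow> real) \<Rightarrow> real \<Rightarrow> real \<Rightarrow> (nat \<Rightarrow> real) \<Rightarrow> real" where
  "priced_value S f y \<Delta> v = (\<Sum>s\<in>S. f s (v s)) + y * (\<Delta> - (\<Sum>s\<in>S. v s))"

definition priced_opt :: "nat set \<Rightarrow> (nat \<Rightarrow> real \<Rightarrow> real) \<Rightarrow> real \<Rightarrow> real \<Rightarrow> real" where
  "priced_opt S f y \<Delta> = Sup (priced_value S f y \<Delta> ` {v. feasible_alloc S \<Delta> v})"

definition slope_le :: "real \<Rightarrow> real \<Rightarrow> (real \<Rightarrow> real) \<Rightarrow> bool" where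
  "slope_le y \<Delta> h \<longleftrightarrow> (\<forall>a b. 0 \<le> a \<longrightarrow> a \<le> b \<longrightarrow> b \<le> \<Delta> \<longrightarrow> h b - h a \<le> y * (b - a))"

lemma eta_OPT_eq_priced_opt: "eta_OPT \<Delta> g t = priced_opt {1..t} g 0 \<Delta>"
  unfolding eta_OPT_def priced_opt_def priced_value_def feasible_alloc_def
  by (simp add: setcompr_eq_image)

lemma feasible_alloc_le_budget:
  assumes "finite S" "feasible_alloc S \<Delta> v" "s \<in> S"
  shows "v s \<le> \<Delta>"
proof -
  have "v s \<le> sum v S" using assms unfolding feasible_alloc_def by (intro member_le_sum) auto
  then show ?thesis using assms unfolding feasible_alloc_def by linarith
qed

lemma bdd_above_priced_value:
  assumes "finite S" "\<forall>s\<in>S. mono_on {0..\<Delta>} (f s)" "0 \<le> y"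
  shows "bdd_above (priced_value S f y \<Delta> ` {v. feasible_alloc S \<Delta> v})"
proof (rule bdd_aboveI2)
  fix v assume v: "v \<in> {v. feasible_alloc S \<Delta> v}"
  have "(\<Sum>s\<in>S. f s (v s)) \<le> (\<Sum>s\<in>S. f s \<Delta>)"
  proof (rule sum_mono)
    fix s assume "s \<in> S"
    then show "f s (v s) \<le> f s \<Delta>" using assms v feasible_alloc_le_budget[of S \<Delta> v s]
      unfolding feasible_alloc_def mono_on_def by auto
  qed
  moreover have "y * (\<Delta> - (\<Sum>s\<in>S. v s)) \<le> y * \<Delta>"
    using v assms(3) unfolding feasible_alloc_def by (simp add: mult_left_mono sum_nonneg)
  ultimately show "priced_value S f y \<Delta> v \<le> (\<Sum>s\<in>S. f s \<Delta>) + y * \<Delta>"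
    unfolding priced_value_def by linarith
qed

lemma priced_value_le_priced_opt:
  assumes "finite S" "\<forall>s\<in>S. mono_on {0..\<Delta>} (f s)" "0 \<le> y" "feasible_alloc S \<Delta> v"
  shows "priced_value S f y \<Delta> v \<le> priced_opt S f y \<Delta>"
  unfolding priced_opt_def using assms bdd_above_priced_value by (intro cSup_upper) auto

lemma priced_opt_least:
  assumes "0 \<le> \<Delta>" "\<And>v. feasible_alloc S \<Delta> v \<Longrightarrow> priced_value S f y \<Delta> v \<le> C"
  shows "priced_opt S f y \<Delta> \<le> C"
proof -
  have "feasible_alloc S \<Delta> (\<lambda>_. 0)" using assms unfolding feasible_alloc_def by auto
  then show ?thesis unfolding priced_opt_def using assms by (intro cSup_least) auto
qed

lemma priced_opt_empty: "0 \<le> \<Delta> \<Longrightarrow> priced_opt {} f y \<Delta> = y * \<Delta>"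
proof -
  assume "0 \<le> \<Delta>"
  then have "priced_value {} f y \<Delta> ` {v. feasible_alloc {} \<Delta> v} = {y * \<Delta>}"
    unfolding priced_value_def feasible_alloc_def by auto
  then show ?thesis unfolding priced_opt_def by simp
qed

lemma priced_opt_insert_bounds:
  assumes fin: "finite S" and tS: "t \<notin> S" and \<Delta>: "0 \<le> \<Delta>"
    and mono: "\<forall>s\<in>insert t S. mono_on {0..\<Delta>} (f s)" and f0: "f t 0 = 0"
  shows "priced_opt S f 0 \<Delta> \<le> priced_opt (insert t S) f 0 \<Delta>"
    and "priced_opt (insert t S) f 0 \<Delta> \<le> priced_opt S f 0 \<Delta> + f t \<Delta>"
proof -
  show "priced_opt S f 0 \<Delta> \<le> priced_opt (insert t S) f 0 \<Delta>"
  proof (rule priced_opt_least[OF \<Delta>])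
    fix v assume fv: "feasible_alloc S \<Delta> v"
    have sums: "(\<Sum>s\<in>S. (v(t := 0)) s) = (\<Sum>s\<in>S. v s)"
      "(\<Sum>s\<in>S. f s ((v(t := 0)) s)) = (\<Sum>s\<in>S. f s (v s))"
      using tS by (auto intro!: sum.cong)
    have fv': "feasible_alloc (insert t S) \<Delta> (v(t := 0))"
      using fv fin tS sums unfolding feasible_alloc_def by auto
    have "priced_value S f 0 \<Delta> v = priced_value (insert t S) f 0 \<Delta> (v(t := 0))"
      using fin tS sums f0 unfolding priced_value_def by simp
    also have "\<dots> \<le> priced_opt (insert t S) f 0 \<Delta>"
      using priced_value_le_priced_opt[OF _ mono _ fv'] fin by simp
    finally show "priced_value S f 0 \<Delta> v \<le> priced_opt (insert t S) f 0 \<Delta>" .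
  qed
  show "priced_opt (insert t S) f 0 \<Delta> \<le> priced_opt S f 0 \<Delta> + f t \<Delta>"
  proof (rule priced_opt_least[OF \<Delta>])
    fix v assume fv: "feasible_alloc (insert t S) \<Delta> v"
    have vt: "0 \<le> v t" "v t \<le> \<Delta>"
      using fv feasible_alloc_le_budget[OF _ fv] fin unfolding feasible_alloc_def by auto
    have "feasible_alloc S \<Delta> v" using fv fin tS vt unfolding feasible_alloc_def by auto
    then have "priced_value S f 0 \<Delta> v \<le> priced_opt S f 0 \<Delta>"
      using priced_value_le_priced_opt[OF fin] mono by simp
    moreover have "f t (v t) \<le> f t \<Delta>" using mono vt \<Delta> unfolding mono_on_def by auto
    ultimately show "priced_value (insert t S) f 0 \<Delta> v \<le> priced_opt S f 0 \<Delta> + f t \<Delta>"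
      using fin tS unfolding priced_value_def by simp
  qed
qed

lemma priced_opt_le_priced_opt_subset:
  assumes fin: "finite B" and AB: "A \<subseteq> B" and y: "0 \<le> y" and \<Delta>: "0 \<le> \<Delta>"
    and mono: "\<forall>s\<in>A. mono_on {0..\<Delta>} (f s)"
    and dom: "\<forall>j\<in>B - A. slope_le y \<Delta> (f j) \<and> f j 0 = 0"
  shows "priced_opt B f 0 \<Delta> \<le> priced_opt A f y \<Delta>"
proof (rule priced_opt_least[OF \<Delta>])
  fix v assume fv: "feasible_alloc B \<Delta> v"
  have split: "(\<Sum>s\<in>B. h s) = (\<Sum>s\<in>A. h s) + (\<Sum>s\<in>B - A. h s)" for h :: "nat \<Rightarrow> real"
    using sum.subset_diff[OF AB fin] by (simp add: add.commute)
  have v: "\<forall>s\<in>B. 0 \<le> v s" "(\<Sum>s\<in>B. v s) \<le> \<Delta>" using fv unfolding feasible_alloc_def by auto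
  have "f j (v j) \<le> y * v j" if "j \<in> B - A" for j
    using dom that v(1) feasible_alloc_le_budget[OF fin fv, of j]
    unfolding slope_le_def by (metis DiffD1 diff_zero order_refl)
  then have rest: "(\<Sum>j\<in>B - A. f j (v j)) \<le> y * (\<Sum>j\<in>B - A. v j)"
    unfolding sum_distrib_left by (intro sum_mono) auto
  have "0 \<le> (\<Sum>j\<in>B - A. v j)" using v by (intro sum_nonneg) auto
  then have fvA: "feasible_alloc A \<Delta> v" using v AB unfolding feasible_alloc_def split[of v] by auto
  have "y * (\<Sum>s\<in>B. v s) \<le> y * \<Delta>" using v y by (simp add: mult_left_mono)
  then have "priced_value B f 0 \<Delta> v \<le> priced_value A f y \<Delta> v"
    using rest unfolding priced_value_def split[of v] split[of "\<lambda>s. f s (v s)"]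
    by (simp add: algebra_simps)
  also have "\<dots> \<le> priced_opt A f y \<Delta>"
    using priced_value_le_priced_opt[OF _ mono y fvA] fin AB finite_subset by blast
  finally show "priced_value B f 0 \<Delta> v \<le> priced_opt A f y \<Delta>" .
qed

lemma concave_on_diff_le_deriv_at_0:
  fixes g :: "real \<Rightarrow> real"
  assumes conc: "concave_on {0..\<Delta>} g" and deriv: "(g has_real_derivative p) (at 0 within {0..\<Delta>})"
    and ab: "0 \<le> a" "a \<le> b" "b \<le> \<Delta>"
  shows "g b - g a \<le> p * (b - a)"
proof (cases "a = b")
  case True then show ?thesis by simp
next
  case False
  then have "a < b" using ab by simp
  have concb: "concave_on {0..b} g"
    using convex_on_subset[OF conc[unfolded concave_on_def], of "{0..b}"] ab
    unfolding concave_on_def by auto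
  define S where "S = (g b - g a) / (b - a)"
  have "g a \<ge> (g b - g 0) / (b - 0) * (a - 0) + g 0"
    using concave_onD_Icc'[OF concb, of a] ab by simp
  then have S_le: "S \<le> (g b - g 0) / b"
    unfolding S_def using \<open>a < b\<close> ab by (simp add: field_simps)
  have "S \<le> (g h - g 0) / (h - 0)" if "0 < h" "h < b" for h
  proof -
    have "g h \<ge> (g b - g 0) / (b - 0) * (h - 0) + g 0"
      using concave_onD_Icc'[OF concb, of h] that by simp
    then have "(g b - g 0) / b \<le> (g h - g 0) / h" using that by (simp add: field_simps)
    then show ?thesis using S_le by simp
  qed
  then have "eventually (\<lambda>h. S \<le> (g h - g 0) / (h - 0)) (at 0 within {0..\<Delta>})"
    unfolding eventually_at
    by (intro exI[of _ b]) (use \<open>a < b\<close> ab in \<open>auto simp: dist_real_def\<close>)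
  moreover have "((\<lambda>h. (g h - g 0) / (h - 0)) \<longlongrightarrow> p) (at 0 within {0..\<Delta>})"
    using deriv unfolding has_field_derivative_iff .
  moreover have "at (0::real) within {0..\<Delta>} \<noteq> bot"
    using \<open>a < b\<close> ab by (simp add: at_within_Icc_at_right)
  ultimately have "S \<le> p" using tendsto_lowerbound by blast
  then show ?thesis unfolding S_def using \<open>a < b\<close> by (simp add: divide_simps mult.commute)
qed

lemma concave_on_slope_le:
  fixes g :: "real \<Rightarrow> real"
  assumes "concave_on {0..\<Delta>} g" "(g has_real_derivative p) (at 0 within {0..\<Delta>})" "p \<le> y"
  shows "slope_le y \<Delta> g"
  unfolding slope_le_def
proof (intro allI impI)
  fix a b :: real assume ab: "0 \<le> a" "a \<le> b" "b \<le> \<Delta>"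
  have "g b - g a \<le> p * (b - a)" using concave_on_diff_le_deriv_at_0[OF assms(1,2) ab] .
  also have "\<dots> \<le> y * (b - a)" using assms(3) ab by (intro mult_right_mono) auto
  finally show "g b - g a \<le> y * (b - a)" .
qed

lemma concave_on_add_le_inner_pair:
  fixes h :: "real \<Rightarrow> real"
  assumes "concave_on {0..\<Delta>} h" "0 \<le> x" "x \<le> z" "z \<le> \<Delta>" "0 \<le> \<theta>" "\<theta> \<le> 1"
  shows "h x + h z \<le> h (x + \<theta> * (z - x)) + h (z - \<theta> * (z - x))"
proof -
  have "h ((1 - \<theta>) *\<^sub>R x + \<theta> *\<^sub>R z) \<ge> (1 - \<theta>) * h x + \<theta> * h z"
    and "h ((1 - (1 - \<theta>)) *\<^sub>R x + (1 - \<theta>) *\<^sub>R z) \<ge> (1 - (1 - \<theta>)) * h x + (1 - \<theta>) * h z"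
    by (rule concave_onD[OF assms(1)]; use assms in auto)+
  moreover have "(1 - \<theta>) *\<^sub>R x + \<theta> *\<^sub>R z = x + \<theta> * (z - x)"
    and "(1 - (1 - \<theta>)) *\<^sub>R x + (1 - \<theta>) *\<^sub>R z = z - \<theta> * (z - x)"
    by (simp_all add: algebra_simps)
  ultimately show ?thesis by (simp add: algebra_simps)
qed

definition spread :: "real \<Rightarrow> real \<Rightarrow> real \<Rightarrow> real" where
  "spread \<theta> x z = min x z + \<theta> * (max x z - min x z)"

lemma spread_bounds:
  assumes "0 \<le> \<theta>" "\<theta> \<le> 1"
  shows "min x z \<le> spread \<theta> x z" "spread \<theta> x z \<le> max x z"
    "min x z \<le> x + z - spread \<theta> x z" "x + z - spread \<theta> x z \<le> max x z"
proof -
  have "\<theta> * (max x z - min x z) \<le> max x z - min x z"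
    using assms by (intro mult_left_le_one_le) auto
  moreover have "0 \<le> \<theta> * (max x z - min x z)" using assms by simp
  moreover have "x + z = min x z + max x z" by (simp add: min_def max_def)
  ultimately show "min x z \<le> spread \<theta> x z" "spread \<theta> x z \<le> max x z"
    "min x z \<le> x + z - spread \<theta> x z" "x + z - spread \<theta> x z \<le> max x z"
    unfolding spread_def by linarith+
qed

lemma concave_on_spread:
  fixes h :: "real \<Rightarrow> real"
  assumes "concave_on {0..\<Delta>} h" "x \<in> {0..\<Delta>}" "z \<in> {0..\<Delta>}" "0 \<le> \<theta>" "\<theta> \<le> 1"
  shows "h x + h z \<le> h (spread \<theta> x z) + h (x + z - spread \<theta> x z)"
proof (cases "x \<le> z")
  case True
  then show ?thesis
    using concave_on_add_le_inner_pair[of \<Delta> h x z \<theta>] assms by (simp add: spread_def)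
next
  case False
  then show ?thesis
    using concave_on_add_le_inner_pair[of \<Delta> h z x \<theta>] assms by (simp add: spread_def add.commute)
qed

section \<open>The exchange argument\<close>

lemma exists_affine_between:
  fixes L H \<beta> \<Delta> :: real
  assumes "L \<le> \<Delta>" "\<beta> \<le> \<Delta>" "L \<le> H" "\<beta> \<le> H"
  obtains \<theta> where "0 \<le> \<theta>" "\<theta> \<le> 1" "\<beta> \<le> L + \<theta> * (H - L)" "L + \<theta> * (H - L) \<le> \<Delta>"
proof (cases "H \<le> \<Delta>")
  case True
  then show ?thesis using assms by (intro that[of 1]) auto
next
  case False
  then have "L + (\<Delta> - L) / (H - L) * (H - L) = \<Delta>" using assms(1) by simp
  then show ?thesis using assms False by (intro that[of "(\<Delta> - L) / (H - L)"]) (auto simp: divide_simps)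
qed

text \<open>
  Exchange of allocations \<open>u\<close> of \<open>insert t A\<close> and \<open>v\<close> of \<open>B \<supseteq> A\<close>: on \<open>A\<close> the pair
  \<open>u s, v s\<close> is moved towards each other, which concavity makes profitable; on \<open>B - A\<close> the
  allocation \<open>v\<close> is scaled by \<open>\<theta>\<close>, losing at most \<open>y\<close> per unit of freed budget. The factor
  \<open>\<theta>\<close> is chosen so that the merged allocation fits into the budget.
\<close>

definition exchange_merge ::
    "nat set \<Rightarrow> nat \<Rightarrow> real \<Rightarrow> (nat \<Rightarrow> real) \<Rightarrow> (nat \<Rightarrow> real) \<Rightarrow> nat \<Rightarrow> real" where
  "exchange_merge A t \<theta> u v s =
     (if s = t then u t else if s \<in> A then spread \<theta> (u s) (v s) else \<theta> * v s)"

definition exchange_rest :: "real \<Rightarrow> (nat \<Rightarrow> real) \<Rightarrow> (nat \<Rightarrow> real) \<Rightarrow> nat \<Rightarrow> real" where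
  "exchange_rest \<theta> u v s = u s + v s - spread \<theta> (u s) (v s)"

lemma sum_split_subset:
  fixes h :: "nat \<Rightarrow> real"
  assumes "finite B" "A \<subseteq> B"
  shows "(\<Sum>s\<in>B. h s) = (\<Sum>s\<in>A. h s) + (\<Sum>s\<in>B - A. h s)"
  using sum.subset_diff[OF assms(2,1)] by (simp add: add.commute)

lemma sum_exchange_merge:
  fixes h :: "nat \<Rightarrow> real \<Rightarrow> real"
  assumes "finite B" "A \<subseteq> B" "t \<notin> B"
  shows "(\<Sum>s\<in>insert t B. h s (exchange_merge A t \<theta> u v s)) =
    h t (u t) + (\<Sum>s\<in>A. h s (spread \<theta> (u s) (v s))) + (\<Sum>s\<in>B - A. h s (\<theta> * v s))"
proof -
  have "(\<Sum>s\<in>B. h s (exchange_merge A t \<theta> u v s)) =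
      (\<Sum>s\<in>A. h s (spread \<theta> (u s) (v s))) + (\<Sum>s\<in>B - A. h s (\<theta> * v s))"
    unfolding sum_split_subset[OF assms(1,2)] using assms(2,3)
    by (intro arg_cong2[where f = "(+)"] sum.cong) (auto simp: exchange_merge_def)
  then show ?thesis using assms by (simp add: exchange_merge_def)
qed

lemma priced_value_exchange:
  assumes fin: "finite B" and AB: "A \<subseteq> B" and tB: "t \<notin> B" and y: "0 \<le> y"
    and conc: "\<forall>s\<in>A. concave_on {0..\<Delta>} (f s)" and slope: "\<forall>j\<in>B - A. slope_le y \<Delta> (f j)"
    and u: "\<forall>s\<in>A. u s \<in> {0..\<Delta>}" and v: "\<forall>s\<in>B. v s \<in> {0..\<Delta>}" and \<theta>: "0 \<le> \<theta>" "\<theta> \<le> 1"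
  shows "priced_value (insert t A) f y \<Delta> u + priced_value B f 0 \<Delta> v
      + y * ((\<Sum>s\<in>insert t B. exchange_merge A t \<theta> u v s) - (\<Sum>s\<in>B. v s))
    \<le> priced_value A f y \<Delta> (exchange_rest \<theta> u v) + priced_value (insert t B) f 0 \<Delta> (exchange_merge A t \<theta> u v)"
proof -
  have finA: "finite A" using fin AB finite_subset by blast
  have tA: "t \<notin> A" using tB AB by blast
  have "(\<Sum>s\<in>A. f s (u s) + f s (v s)) \<le>
      (\<Sum>s\<in>A. f s (spread \<theta> (u s) (v s)) + f s (exchange_rest \<theta> u v s))"
    unfolding exchange_rest_def using conc u v AB \<theta>
    by (intro sum_mono concave_on_spread) auto
  moreover have "(\<Sum>j\<in>B - A. f j (v j)) \<le> (\<Sum>j\<in>B - A. f j (\<theta> * v j) + y * ((1 - \<theta>) * v j))"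
  proof (rule sum_mono)
    fix j assume j: "j \<in> B - A"
    have "\<theta> * v j \<le> v j" using v j \<theta> by (intro mult_left_le_one_le) auto
    then have "f j (v j) - f j (\<theta> * v j) \<le> y * (v j - \<theta> * v j)"
      using slope j v \<theta> unfolding slope_le_def by auto
    then show "f j (v j) \<le> f j (\<theta> * v j) + y * ((1 - \<theta>) * v j)" by (simp add: algebra_simps)
  qed
  ultimately show ?thesis
    using finA tA sum_exchange_merge[OF fin AB tB, of "\<lambda>_ x. x"]
      sum_exchange_merge[OF fin AB tB, of f]
    unfolding priced_value_def sum_split_subset[OF fin AB, of v]
      sum_split_subset[OF fin AB, of "\<lambda>s. f s (v s)"]
    by (simp add: exchange_rest_def sum.distrib sum_subtractf sum_distrib_left algebra_simps)
qed

lemma feasible_alloc_exchange: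
  assumes fin: "finite B" and AB: "A \<subseteq> B" and tB: "t \<notin> B"
    and fu: "feasible_alloc (insert t A) \<Delta> u" and v: "\<forall>s\<in>B. 0 \<le> v s" and \<theta>: "0 \<le> \<theta>" "\<theta> \<le> 1"
    and budget: "(\<Sum>s\<in>B. v s) \<le> (\<Sum>s\<in>insert t B. exchange_merge A t \<theta> u v s)"
      "(\<Sum>s\<in>insert t B. exchange_merge A t \<theta> u v s) \<le> \<Delta>"
  shows "feasible_alloc A \<Delta> (exchange_rest \<theta> u v)"
    and "feasible_alloc (insert t B) \<Delta> (exchange_merge A t \<theta> u v)"
proof -
  have "finite A" "t \<notin> A" using fin AB tB finite_subset by auto
  then have u: "\<forall>s\<in>insert t A. 0 \<le> u s" "u t + (\<Sum>s\<in>A. u s) \<le> \<Delta>"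
    using fu unfolding feasible_alloc_def by auto
  have spread: "min (u s) (v s) \<le> spread \<theta> (u s) (v s)"
    "min (u s) (v s) \<le> exchange_rest \<theta> u v s" for s
    using spread_bounds[OF \<theta>] unfolding exchange_rest_def by auto
  have "0 \<le> exchange_merge A t \<theta> u v s" if "s \<in> insert t B" for s
    using that u(1) v \<theta> AB unfolding exchange_merge_def
    by (auto intro: order_trans[OF _ spread(1)[of s]])
  then show "feasible_alloc (insert t B) \<Delta> (exchange_merge A t \<theta> u v)"
    using budget(2) unfolding feasible_alloc_def by blast
  have "\<theta> * (\<Sum>j\<in>B - A. v j) \<le> (\<Sum>j\<in>B - A. v j)"
    using v \<theta> by (intro mult_left_le_one_le sum_nonneg) auto
  then have "(\<Sum>s\<in>A. exchange_rest \<theta> u v s) \<le> \<Delta>"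
    using budget(1) u(2) sum_exchange_merge[OF fin AB tB, of "\<lambda>_ x. x"]
    unfolding sum_split_subset[OF fin AB, of v]
    by (simp add: exchange_rest_def sum.distrib sum_subtractf sum_distrib_left)
  moreover have "0 \<le> exchange_rest \<theta> u v s" if "s \<in> A" for s
    using that spread(2)[of s] u(1) v AB by fastforce
  ultimately show "feasible_alloc A \<Delta> (exchange_rest \<theta> u v)" unfolding feasible_alloc_def by blast
qed

lemma exists_exchange_alloc:
  assumes fin: "finite B" and AB: "A \<subseteq> B" and tB: "t \<notin> B" and y: "0 \<le> y"
    and conc: "\<forall>s\<in>A. concave_on {0..\<Delta>} (f s)" and slope: "\<forall>j\<in>B - A. slope_le y \<Delta> (f j)"
    and fu: "feasible_alloc (insert t A) \<Delta> u" and fv: "feasible_alloc B \<Delta> v"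
  obtains b w where "feasible_alloc A \<Delta> b" "feasible_alloc (insert t B) \<Delta> w"
    "priced_value (insert t A) f y \<Delta> u + priced_value B f 0 \<Delta> v
      \<le> priced_value A f y \<Delta> b + priced_value (insert t B) f 0 \<Delta> w"
proof -
  have finA: "finite A" using fin AB finite_subset by blast
  have tA: "t \<notin> A" using tB AB by blast
  have u: "\<forall>s\<in>insert t A. u s \<in> {0..\<Delta>}" "u t + (\<Sum>s\<in>A. u s) \<le> \<Delta>"
    using fu feasible_alloc_le_budget[OF _ fu] finA tA unfolding feasible_alloc_def by auto
  have v: "\<forall>s\<in>B. v s \<in> {0..\<Delta>}" "(\<Sum>s\<in>B. v s) \<le> \<Delta>"
    using fv feasible_alloc_le_budget[OF fin fv] unfolding feasible_alloc_def by auto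
  define L where "L = u t + (\<Sum>s\<in>A. min (u s) (v s))"
  define H where "H = u t + (\<Sum>s\<in>A. max (u s) (v s)) + (\<Sum>j\<in>B - A. v j)"
  have sum_merge: "(\<Sum>s\<in>insert t B. exchange_merge A t \<theta> u v s) = L + \<theta> * (H - L)" for \<theta>
    using sum_exchange_merge[OF fin AB tB, of "\<lambda>_ x. x"]
    by (simp add: L_def H_def spread_def sum.distrib sum_subtractf sum_distrib_left algebra_simps)
  have "(\<Sum>s\<in>A. min (u s) (v s)) \<le> (\<Sum>s\<in>A. u s)" by (intro sum_mono) auto
  then have "L \<le> \<Delta>" using u unfolding L_def by linarith
  moreover have "(\<Sum>s\<in>A. min (u s) (v s)) \<le> (\<Sum>s\<in>A. max (u s) (v s))"
    and "(\<Sum>s\<in>A. v s) \<le> (\<Sum>s\<in>A. max (u s) (v s))" and "0 \<le> (\<Sum>j\<in>B - A. v j)"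
    using v by (auto intro: sum_mono sum_nonneg)
  then have "L \<le> H" "(\<Sum>s\<in>B. v s) \<le> H"
    using u unfolding L_def H_def sum_split_subset[OF fin AB, of v] by auto
  ultimately obtain \<theta> where \<theta>: "0 \<le> \<theta>" "\<theta> \<le> 1"
    and budget: "(\<Sum>s\<in>B. v s) \<le> (\<Sum>s\<in>insert t B. exchange_merge A t \<theta> u v s)"
      "(\<Sum>s\<in>insert t B. exchange_merge A t \<theta> u v s) \<le> \<Delta>"
    using exists_affine_between v(2) unfolding sum_merge by metis
  have "feasible_alloc A \<Delta> (exchange_rest \<theta> u v)"
    "feasible_alloc (insert t B) \<Delta> (exchange_merge A t \<theta> u v)"
    using feasible_alloc_exchange[OF fin AB tB fu _ \<theta> budget] v(1) by auto
  moreover have "0 \<le> y * ((\<Sum>s\<in>insert t B. exchange_merge A t \<theta> u v s) - (\<Sum>s\<in>B. v s))"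
    using y budget(1) by simp
  ultimately show ?thesis
    using that priced_value_exchange[OF fin AB tB y conc slope _ v(1) \<theta>] u(1) by fastforce
qed

lemma priced_opt_exchange:
  assumes fin: "finite B" and AB: "A \<subseteq> B" and tB: "t \<notin> B" and y: "0 \<le> y" and \<Delta>: "0 \<le> \<Delta>"
    and mono: "\<forall>s\<in>insert t B. mono_on {0..\<Delta>} (f s)"
    and conc: "\<forall>s\<in>A. concave_on {0..\<Delta>} (f s)" and slope: "\<forall>j\<in>B - A. slope_le y \<Delta> (f j)"
  shows "priced_opt (insert t A) f y \<Delta> + priced_opt B f 0 \<Delta>
    \<le> priced_opt A f y \<Delta> + priced_opt (insert t B) f 0 \<Delta>"
proof -
  let ?R = "priced_opt A f y \<Delta> + priced_opt (insert t B) f 0 \<Delta>"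
  have finA: "finite A" using fin AB finite_subset by blast
  have pair: "priced_value (insert t A) f y \<Delta> u \<le> ?R - priced_value B f 0 \<Delta> v"
    if fu: "feasible_alloc (insert t A) \<Delta> u" and fv: "feasible_alloc B \<Delta> v" for u v
  proof -
    obtain b w where b: "feasible_alloc A \<Delta> b" and w: "feasible_alloc (insert t B) \<Delta> w"
      and le: "priced_value (insert t A) f y \<Delta> u + priced_value B f 0 \<Delta> v
        \<le> priced_value A f y \<Delta> b + priced_value (insert t B) f 0 \<Delta> w"
      using exists_exchange_alloc[OF fin AB tB y conc slope fu fv] .
    have "priced_value A f y \<Delta> b \<le> priced_opt A f y \<Delta>"
      using priced_value_le_priced_opt[OF finA _ y b] mono AB by auto
    moreover have "priced_value (insert t B) f 0 \<Delta> w \<le> priced_opt (insert t B) f 0 \<Delta>"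
      using priced_value_le_priced_opt[OF _ mono _ w] fin by simp
    ultimately show ?thesis using le by linarith
  qed
  have "priced_value B f 0 \<Delta> v \<le> ?R - priced_opt (insert t A) f y \<Delta>" if "feasible_alloc B \<Delta> v" for v
    using priced_opt_least[OF \<Delta> pair[OF _ that]] by linarith
  then have "priced_opt B f 0 \<Delta> \<le> ?R - priced_opt (insert t A) f y \<Delta>"
    by (rule priced_opt_least[OF \<Delta>])
  then show ?thesis by linarith
qed

section \<open>The level condition\<close>

lemma eta_OPT_increments_le_priced_gap:
  assumes \<Delta>: "0 \<le> \<Delta>" and y: "0 \<le> y"
    and mono: "\<forall>t\<in>{1..n}. mono_on {0..\<Delta>} (f t)"
    and conc: "\<forall>t\<in>{1..n}. concave_on {0..\<Delta>} (f t)"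
    and slope: "\<forall>t\<in>{1..n}. p t \<le> y \<longrightarrow> slope_le y \<Delta> (f t)"
  shows "(\<Sum>t\<in>{t\<in>{1..n}. p t \<le> y}. eta_OPT \<Delta> f t - eta_OPT \<Delta> f (t - 1))
    \<le> eta_OPT \<Delta> f n - priced_opt {t\<in>{1..n}. y < p t} f y \<Delta> + y * \<Delta>"
  using mono conc slope
proof (induction n)
  case 0
  then show ?case using priced_opt_empty[OF \<Delta>] by (simp add: eta_OPT_eq_priced_opt)
next
  case (Suc n)
  let ?A = "{t\<in>{1..n}. y < p t}"
  have IH: "(\<Sum>t\<in>{t\<in>{1..n}. p t \<le> y}. eta_OPT \<Delta> f t - eta_OPT \<Delta> f (t - 1))
      \<le> eta_OPT \<Delta> f n - priced_opt ?A f y \<Delta> + y * \<Delta>"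
    using Suc by simp
  have ins: "{1..Suc n} = insert (Suc n) {1..n}" by auto
  show ?case
  proof (cases "p (Suc n) \<le> y")
    case True
    then have "{t\<in>{1..Suc n}. p t \<le> y} = insert (Suc n) {t\<in>{1..n}. p t \<le> y}"
      and "{t\<in>{1..Suc n}. y < p t} = ?A"
      by (auto simp: le_Suc_eq)
    then show ?thesis using IH by simp
  next
    case False
    then have "{t\<in>{1..Suc n}. p t \<le> y} = {t\<in>{1..n}. p t \<le> y}"
      and A: "{t\<in>{1..Suc n}. y < p t} = insert (Suc n) ?A"
      by (auto simp: le_Suc_eq)
    moreover have "priced_opt (insert (Suc n) ?A) f y \<Delta> + priced_opt {1..n} f 0 \<Delta>
        \<le> priced_opt ?A f y \<Delta> + priced_opt (insert (Suc n) {1..n}) f 0 \<Delta>"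
      using Suc.prems by (intro priced_opt_exchange[OF _ _ _ y \<Delta>]) (auto simp: ins not_less)
    ultimately show ?thesis using IH unfolding eta_OPT_eq_priced_opt ins[symmetric] by simp
  qed
qed

lemma eta_OPT_increments_le:
  assumes \<Delta>: "0 \<le> \<Delta>" and y: "0 \<le> y"
    and mono: "\<forall>t\<in>{1..n}. mono_on {0..\<Delta>} (f t)"
    and conc: "\<forall>t\<in>{1..n}. concave_on {0..\<Delta>} (f t)"
    and slope: "\<forall>t\<in>{1..n}. p t \<le> y \<longrightarrow> slope_le y \<Delta> (f t) \<and> f t 0 = 0"
  shows "(\<Sum>t\<in>{t\<in>{1..n}. p t \<le> y}. eta_OPT \<Delta> f t - eta_OPT \<Delta> f (t - 1)) \<le> y * \<Delta>"
proof -
  have "eta_OPT \<Delta> f n \<le> priced_opt {t\<in>{1..n}. y < p t} f y \<Delta>"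
    unfolding eta_OPT_eq_priced_opt using mono slope
    by (intro priced_opt_le_priced_opt_subset[OF _ _ y \<Delta>]) auto
  then show ?thesis
    using eta_OPT_increments_le_priced_gap[OF \<Delta> y mono conc, of p] slope by simp
qed

section \<open>Sums of ratios under the level condition\<close>

text \<open>
  The largest value of \<open>\<Sum> D i / p i\<close> compatible with total mass \<open>s\<close>, \<open>p i \<ge> m\<close> and the
  level condition: mass up to \<open>m \<Delta>\<close> at level \<open>m\<close>, the rest with density \<open>\<Delta>\<close> on the levels
  \<open>[m, s / \<Delta>]\<close>.
\<close>

definition level_ratio_bound :: "real \<Rightarrow> real \<Rightarrow> real \<Rightarrow> real" where
  "level_ratio_bound m \<Delta> s = (if s \<le> m * \<Delta> then s / m else \<Delta> * (1 + ln (s / (m * \<Delta>))))"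

lemma ln_ge_one_minus_inverse: "0 < x \<Longrightarrow> 1 - 1 / x \<le> ln (x :: real)"
  using ln_le_minus_one[of "1 / x"] by (simp add: ln_div)

lemma level_ratio_bound_diff_ge:
  assumes m: "0 < m" and \<Delta>: "0 < \<Delta>" and ab: "0 \<le> a" "a < b"
  shows "(b - a) * min (1 / m) (\<Delta> / b) \<le> level_ratio_bound m \<Delta> b - level_ratio_bound m \<Delta> a"
proof -
  have b: "0 < b" using ab by simp
  have min_le: "(b - a) * min (1 / m) (\<Delta> / b) \<le> (b - a) * (\<Delta> / b)"
    using ab by (intro mult_left_mono) auto
  consider "b \<le> m * \<Delta>" | "a \<le> m * \<Delta>" "m * \<Delta> < b" | "m * \<Delta> < a" by linarith
  then show ?thesis
  proof cases
    case 1
    have "(b - a) * min (1 / m) (\<Delta> / b) \<le> (b - a) * (1 / m)" using ab by (intro mult_left_mono) auto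
    then show ?thesis using 1 ab by (simp add: level_ratio_bound_def diff_divide_distrib)
  next
    case 2
    have "1 - m * \<Delta> / b \<le> ln (b / (m * \<Delta>))"
      using ln_ge_one_minus_inverse[of "b / (m * \<Delta>)"] m \<Delta> b by simp
    then have "\<Delta> - m * \<Delta> * \<Delta> / b \<le> \<Delta> * ln (b / (m * \<Delta>))"
      using \<Delta> mult_left_mono[of _ _ \<Delta>] by (fastforce simp: algebra_simps)
    moreover have "0 \<le> (m * \<Delta> - a) * (1 / m - \<Delta> / b)"
      using 2 m b by (intro mult_nonneg_nonneg) (auto simp: field_simps)
    moreover have "(m * \<Delta> - a) * (1 / m - \<Delta> / b) = \<Delta> - a / m - m * \<Delta> * \<Delta> / b + a * \<Delta> / b"
      and "(b - a) * (\<Delta> / b) = \<Delta> - a * \<Delta> / b"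
      using m b by (simp_all add: field_simps)
    ultimately have "(b - a) * (\<Delta> / b) \<le> \<Delta> * (1 + ln (b / (m * \<Delta>))) - a / m"
      by (simp add: algebra_simps)
    moreover have "level_ratio_bound m \<Delta> b - level_ratio_bound m \<Delta> a
        = \<Delta> * (1 + ln (b / (m * \<Delta>))) - a / m"
      using 2 by (simp add: level_ratio_bound_def)
    ultimately show ?thesis using min_le by linarith
  next
    case 3
    then have a: "0 < a" using m \<Delta> by (smt (verit) mult_pos_pos)
    have "1 - a / b \<le> ln (b / a)" using ln_ge_one_minus_inverse[of "b / a"] a b by simp
    then have "\<Delta> * (1 - a / b) \<le> \<Delta> * ln (b / a)" using \<Delta> by (intro mult_left_mono) auto
    moreover have "(b - a) * (\<Delta> / b) = \<Delta> * (1 - a / b)" using b by (simp add: field_simps)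
    ultimately have "(b - a) * (\<Delta> / b) \<le> \<Delta> * ln (b / a)" by simp
    moreover have "ln (b / (m * \<Delta>)) = ln (b / a) + ln (a / (m * \<Delta>))"
      using a b m \<Delta> by (simp add: ln_div)
    moreover have "level_ratio_bound m \<Delta> b - level_ratio_bound m \<Delta> a = \<Delta> * ln (b / (m * \<Delta>)) - \<Delta> * ln (a / (m * \<Delta>))"
      using 3 ab by (simp add: level_ratio_bound_def algebra_simps)
    ultimately show ?thesis using min_le by (simp add: algebra_simps)
  qed
qed

lemma level_ratio_bound_add_ge:
  assumes m: "0 < m" and \<Delta>: "0 < \<Delta>" and s: "0 \<le> s" and d: "0 \<le> d"
    and P: "m \<le> P" and level: "s + d \<le> P * \<Delta>"
  shows "level_ratio_bound m \<Delta> s + d / P \<le> level_ratio_bound m \<Delta> (s + d)"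
proof (cases "d = 0")
  case False
  then have "0 < s + d" using s d by simp
  then have "1 / P \<le> \<Delta> / (s + d)" using level m P by (simp add: field_simps)
  moreover have "1 / P \<le> 1 / m" using m P by (simp add: frac_le)
  ultimately have "d * (1 / P) \<le> d * min (1 / m) (\<Delta> / (s + d))" using d by (intro mult_left_mono) auto
  then show ?thesis using level_ratio_bound_diff_ge[OF m \<Delta> s, of "s + d"] False d by simp
qed simp

lemma level_ratio_bound_le:
  assumes m: "0 < m" "m \<le> M" and \<Delta>: "0 < \<Delta>" and s: "0 \<le> s" "s \<le> M * \<Delta>"
  shows "level_ratio_bound m \<Delta> s \<le> \<Delta> * (ln (M / m) + 1)"
proof (cases "s \<le> m * \<Delta>")
  case True
  then have "s / m \<le> \<Delta>" using m by (simp add: field_simps)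
  moreover have "0 \<le> \<Delta> * ln (M / m)" using m \<Delta> by simp
  ultimately show ?thesis using True unfolding level_ratio_bound_def by (simp add: algebra_simps)
next
  case False
  then have "0 < s" using m \<Delta> by (smt (verit) mult_pos_pos)
  moreover have "s / (m * \<Delta>) \<le> M / m" using s m \<Delta> by (simp add: field_simps)
  ultimately have "ln (s / (m * \<Delta>)) \<le> ln (M / m)" using m \<Delta> by simp
  then show ?thesis using False \<Delta> unfolding level_ratio_bound_def by (simp add: algebra_simps)
qed

lemma sum_div_le_level_ratio_bound:
  fixes D p :: "nat \<Rightarrow> real"
  assumes fin: "finite I" and m: "0 < m" and \<Delta>: "0 < \<Delta>"
    and pos: "\<forall>i\<in>I. 0 \<le> D i \<and> m \<le> p i"
    and level: "\<forall>y\<ge>0. (\<Sum>i\<in>{i\<in>I. p i \<le> y}. D i) \<le> y * \<Delta>"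
  shows "(\<Sum>i\<in>I. D i / p i) \<le> level_ratio_bound m \<Delta> (\<Sum>i\<in>I. D i)"
  using fin pos level
proof (induction I rule: finite_ranking_induct[where f = p])
  case empty
  then show ?case using m \<Delta> by (simp add: level_ratio_bound_def)
next
  case (insert x S)
  show ?case
  proof (cases "x \<in> S")
    case True
    then show ?thesis using insert by (simp add: insert_absorb)
  next
    case False
    have "(\<Sum>i\<in>{i\<in>S. p i \<le> y}. D i) \<le> y * \<Delta>" if "0 \<le> y" for y
    proof -
      have "(\<Sum>i\<in>{i\<in>S. p i \<le> y}. D i) \<le> (\<Sum>i\<in>{i\<in>insert x S. p i \<le> y}. D i)"
        using insert by (intro sum_mono2) auto
      then show ?thesis using insert.prems(2)[rule_format, OF that] by linarith
    qed
    then have IH: "(\<Sum>i\<in>S. D i / p i) \<le> level_ratio_bound m \<Delta> (\<Sum>i\<in>S. D i)"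
      using insert by simp
    have "{i\<in>insert x S. p i \<le> p x} = insert x S" using insert.hyps(2) by auto
    then have "(\<Sum>i\<in>S. D i) + D x \<le> p x * \<Delta>"
      using insert.prems(2)[rule_format, of "p x"] insert.prems(1) m False insert.hyps(1) by simp
    then have "level_ratio_bound m \<Delta> (\<Sum>i\<in>S. D i) + D x / p x
        \<le> level_ratio_bound m \<Delta> ((\<Sum>i\<in>S. D i) + D x)"
      using insert.prems by (intro level_ratio_bound_add_ge[OF m \<Delta>] sum_nonneg) auto
    then show ?thesis using IH False insert.hyps(1) by (simp add: add.commute)
  qed
qed

lemma sum_div_le_of_level:
  fixes D p :: "nat \<Rightarrow> real"
  assumes fin: "finite I" and m: "0 < m" "m \<le> M" and \<Delta>: "0 < \<Delta>"
    and bounds: "\<forall>i\<in>I. 0 \<le> D i \<and> m \<le> p i \<and> p i \<le> M"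
    and level: "\<forall>y\<ge>0. (\<Sum>i\<in>{i\<in>I. p i \<le> y}. D i) \<le> y * \<Delta>"
  shows "(\<Sum>i\<in>I. D i / p i) \<le> \<Delta> * (ln (M / m) + 1)"
proof -
  have "{i\<in>I. p i \<le> M} = I" using bounds by auto
  then have total: "(\<Sum>i\<in>I. D i) \<le> M * \<Delta>" using level m by (metis dual_order.trans less_imp_le)
  have "(\<Sum>i\<in>I. D i / p i) \<le> level_ratio_bound m \<Delta> (\<Sum>i\<in>I. D i)"
    using sum_div_le_level_ratio_bound[OF fin m(1) \<Delta> _ level] bounds by auto
  also have "\<dots> \<le> \<Delta> * (ln (M / m) + 1)"
    using level_ratio_bound_le[OF m \<Delta> sum_nonneg total] bounds by blast
  finally show ?thesis .
qed

lemma in_GD: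
  assumes "in_G \<Delta> m M g"
  shows "mono_on {0..\<Delta>} g" "concave_on {0..\<Delta>} g" "continuous_on {0..\<Delta>} g" "g 0 = 0"
  using assms unfolding in_G_def by (auto intro: differentiable_imp_continuous_on)

lemma in_G_deriv_bounds:
  assumes "in_G \<Delta> m M g" "0 < \<Delta>" "(g has_real_derivative p) (at 0 within {0..\<Delta>})"
  shows "m \<le> p" "p \<le> M"
proof -
  obtain d where d: "(g has_real_derivative d) (at 0 within {0..\<Delta>})" "m \<le> d" "d \<le> M"
    using assms(1) unfolding in_G_def by blast
  have "at (0::real) within {0..\<Delta>} \<noteq> bot" using assms(2) by (simp add: at_within_Icc_at_right)
  then have "p = d" using assms(3) d(1) unfolding has_field_derivative_iff by (rule tendsto_unique)
  then show "m \<le> p" "p \<le> M" using d by auto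
qed

lemma value_at_Inf_level_set:
  fixes g :: "real \<Rightarrow> real"
  assumes cont: "continuous_on {0..\<Delta>} g" and "g 0 = 0" "0 \<le> \<Delta>" "0 \<le> c" "c \<le> g \<Delta>"
  shows "g (Inf {v \<in> {0..\<Delta>}. g v = c}) = c"
proof -
  obtain x where "0 \<le> x" "x \<le> \<Delta>" "g x = c" using IVT'[of g 0 c \<Delta>] assms by auto
  then have "{v \<in> {0..\<Delta>}. g v = c} \<noteq> {}" by auto
  moreover have "bdd_below {v \<in> {0..\<Delta>}. g v = c}" by (rule bdd_belowI[of _ 0]) auto
  moreover have "closed {v \<in> {0..\<Delta>}. g v = c}"
    using continuous_closed_preimage_constant[OF cont] by simp
  ultimately have "Inf {v \<in> {0..\<Delta>}. g v = c} \<in> {v \<in> {0..\<Delta>}. g v = c}"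
    by (rule closed_contains_Inf)
  then show ?thesis by simp
qed

lemma eta_OPT_increment_bounds:
  assumes "1 \<le> t" "0 \<le> \<Delta>" "\<forall>s\<in>{1..t}. mono_on {0..\<Delta>} (f s)" "f t 0 = 0"
  shows "0 \<le> eta_OPT \<Delta> f t - eta_OPT \<Delta> f (t - 1)" "eta_OPT \<Delta> f t - eta_OPT \<Delta> f (t - 1) \<le> f t \<Delta>"
proof -
  have ins: "{1..t} = insert t {1..t - 1}" using assms(1) by auto
  have "t \<notin> {1..t - 1}" using assms(1) by simp
  then have "priced_opt {1..t - 1} f 0 \<Delta> \<le> priced_opt {1..t} f 0 \<Delta>"
    "priced_opt {1..t} f 0 \<Delta> \<le> priced_opt {1..t - 1} f 0 \<Delta> + f t \<Delta>"
    using priced_opt_insert_bounds[of "{1..t - 1}" t \<Delta> f, folded ins] assms(2-4) by simp_all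
  then show "0 \<le> eta_OPT \<Delta> f t - eta_OPT \<Delta> f (t - 1)" "eta_OPT \<Delta> f t - eta_OPT \<Delta> f (t - 1) \<le> f t \<Delta>"
    unfolding eta_OPT_eq_priced_opt by simp_all
qed

lemma cr_pursuit_value:
  assumes "1 \<le> t" "0 \<le> \<Delta>" "1 \<le> \<pi>" "\<forall>s\<in>{1..t}. mono_on {0..\<Delta>} (g s)"
    and "continuous_on {0..\<Delta>} (g t)" "g t 0 = 0"
  shows "g t (cr_pursuit \<Delta> \<pi> g t) = (eta_OPT \<Delta> g t - eta_OPT \<Delta> g (t - 1)) / \<pi>"
proof -
  let ?D = "eta_OPT \<Delta> g t - eta_OPT \<Delta> g (t - 1)"
  have "0 \<le> ?D" "?D \<le> g t \<Delta>" using eta_OPT_increment_bounds[of t \<Delta> g] assms by auto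
  moreover have "?D / \<pi> \<le> ?D" using \<open>0 \<le> ?D\<close> assms(3) by (simp add: divide_le_eq mult_le_cancel_left1)
  ultimately have "0 \<le> ?D / \<pi>" "?D / \<pi> \<le> g t \<Delta>" using assms(3) by auto
  then show ?thesis unfolding cr_pursuit_def by (rule value_at_Inf_level_set[OF assms(5,6,2)])
qed

theorem lemma11:
  fixes \<Delta> m M \<pi> :: real and T :: nat
    and g :: "nat \<Rightarrow> real \<Rightarrow> real" and p :: "nat \<Rightarrow> real"
  assumes "\<Delta> > 0" and "0 < m" and "m \<le> M" and "\<pi> \<ge> 1" and "T \<ge> 1"
    and "\<forall>t\<in>{1..T}. in_G \<Delta> m M (g t)"
    and "\<forall>t\<in>{1..T}. (g t has_real_derivative p t) (at 0 within {0..\<Delta>})"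
  shows "(\<Sum>t=1..T. g t (cr_pursuit \<Delta> \<pi> g t) / p t) \<le> \<Delta> / \<pi> * (ln (M / m) + 1)"
proof -
  define D where "D t = eta_OPT \<Delta> g t - eta_OPT \<Delta> g (t - 1)" for t
  have inG: "in_G \<Delta> m M (g t)" and deriv: "(g t has_real_derivative p t) (at 0 within {0..\<Delta>})"
    if "t \<in> {1..T}" for t
    using assms(6,7) that by auto
  have G: "mono_on {0..\<Delta>} (g t)" "concave_on {0..\<Delta>} (g t)" "continuous_on {0..\<Delta>} (g t)"
    "g t 0 = 0" "m \<le> p t" "p t \<le> M" if "t \<in> {1..T}" for t
    using in_GD[OF inG[OF that]] in_G_deriv_bounds[OF inG[OF that] assms(1) deriv[OF that]] by auto
  have "\<forall>y\<ge>0. (\<Sum>t\<in>{t\<in>{1..T}. p t \<le> y}. D t) \<le> y * \<Delta>"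
    unfolding D_def using G assms(1) concave_on_slope_le[OF G(2) deriv]
    by (intro allI impI eta_OPT_increments_le) auto
  moreover have "0 \<le> D t" if "t \<in> {1..T}" for t
    unfolding D_def using eta_OPT_increment_bounds[of t \<Delta> g] G that assms(1) by auto
  ultimately have "(\<Sum>t\<in>{1..T}. D t / p t) \<le> \<Delta> * (ln (M / m) + 1)"
    using G assms(1-3) by (intro sum_div_le_of_level) auto
  moreover have "g t (cr_pursuit \<Delta> \<pi> g t) = D t / \<pi>" if "t \<in> {1..T}" for t
    unfolding D_def using that G assms(1,4) by (intro cr_pursuit_value) auto
  then have "(\<Sum>t=1..T. g t (cr_pursuit \<Delta> \<pi> g t) / p t) = (\<Sum>t\<in>{1..T}. D t / p t) / \<pi>"
    unfolding sum_divide_distrib by (intro sum.cong) auto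
  ultimately show ?thesis using assms(4) by (simp add: divide_right_mono)
qed

end
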